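(* Let $\vec{\Phi}_1,\vec{\Phi}_2\in\mathbb{R}^2$ be unit vectors with $\vec{\Phi}_1\cdot\vec{\Phi}_2=1/2$, let $\vec{\phi}_1=-(\vec{\Phi}_1+\vec{\Phi}_2)/3$, and let $\mathbb{E}_1=\{n\vec{\Phi}_1+m\vec{\Phi}_2+\vec{\phi}_1 \mid n,m\in\mathbb{Z}\}$. For $\vec{\lambda}\in\mathbb{R}^2$ put $N(\vec{\lambda})=\vec{\lambda}\cdot\vec{\lambda}$. Let $L>0$. Then there are exactly $3$ distinct vectors $\vec{\lambda}\in\mathbb{E}_1$ with $\sqrt{N(\vec{\lambda})}=L$ if and only if $L=3^{-1/2}\prod_j m_j^{\mu_j}$, a finite product with exponents $\mu_j\in\mathbb{N}$ and primes $m_j\equiv 2\pmod{3}$.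
   Context: $\mathbb{E}_1$ is the triangular lattice spanned by $\vec{\Phi}_1,\vec{\Phi}_2$ (angle $60^\circ$) translated by $\vec{\phi}_1$; $N$ is the squared Euclidean norm. *)

theory Defs
  imports "HOL-Analysis.Analysis" "HOL-Library.Multiset" "HOL-Computational_Algebra.Primes"
begin

definition lattice_E1 :: "real^2 \<Rightarrow> real^2 \<Rightarrow> (real^2) set" where
  "lattice_E1 \<Phi>1 \<Phi>2 =
     {of_int n *\<^sub>R \<Phi>1 + of_int m *\<^sub>R \<Phi>2 - (1/3) *\<^sub>R (\<Phi>1 + \<Phi>2) | n m :: int. True}"

definition normN :: "real^2 \<Rightarrow> real" where
  "normN v = v \<bullet> v"

end

theory Submission
  imports Defs "HOL-Number_Theory.Number_Theory" "HOL-Library.Discrete_Functions"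
begin

text \<open>
  Every point of \<open>E\<^sub>1\<close> is \<open>(a \<Phi>\<^sub>1 + b \<Phi>\<^sub>2) / 3\<close> with \<open>a \<equiv> b \<equiv> 2 (mod 3)\<close>, and its
  squared norm is \<open>(a\<^sup>2 + ab + b\<^sup>2) / 9\<close>; so we count the representations of \<open>K = 9 L\<^sup>2\<close>
  by this form subject to the congruences. They are permuted by the rotations by \<open>\<plusminus>120\<degree>\<close> and
  the reflection \<open>a \<leftrightarrow> b\<close>, so three representations are only possible if one of them lies on
  a mirror axis, which forces \<open>K = 3 t\<^sup>2\<close> with \<open>t \<equiv> 2 (mod 3)\<close>. A prime \<open>p \<equiv> 1 (mod 3)\<close>
  dividing \<open>t\<close> is itself of the form \<open>c\<^sup>2 + cd + d\<^sup>2\<close> (Thue's lemma), and squaring \<open>c - d\<omega>\<close>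
  yields a representation of \<open>3 t\<^sup>2\<close> off the axes, hence at least four. Conversely, a prime
  \<open>p \<equiv> 2 (mod 3)\<close> dividing \<open>a\<^sup>2 + ab + b\<^sup>2\<close> divides \<open>a\<close> and \<open>b\<close>, because cubing is injective
  modulo \<open>p\<close>. So if \<open>t\<close> is a product of such primes, every representation of \<open>3 t\<^sup>2\<close> is \<open>t\<close>
  times one of the six representations of \<open>3\<close>, and exactly three of these meet the congruences.
\<close>

text \<open>The norm of \<open>x - y\<omega>\<close> in \<open>\<int>[\<omega>]\<close>, \<open>\<omega>\<close> a primitive cube root of unity.\<close>

definition eisenstein_norm :: "int \<Rightarrow> int \<Rightarrow> int" where
  "eisenstein_norm x y = x^2 + x*y + y^2"

lemma four_eisenstein_norm: "4 * eisenstein_norm x y = (2*x + y)^2 + 3 * y^2"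
  by (simp add: eisenstein_norm_def power2_eq_square algebra_simps)

lemma eisenstein_norm_pos:
  assumes "x \<noteq> 0 \<or> y \<noteq> 0"
  shows "eisenstein_norm x y > 0"
proof (cases "y = 0")
  case True
  then show ?thesis using assms by (simp add: eisenstein_norm_def)
next
  case False
  then have "4 * eisenstein_norm x y > 0"
    unfolding four_eisenstein_norm by (simp add: add_nonneg_pos)
  then show ?thesis by simp
qed

lemma eisenstein_norm_nonneg: "eisenstein_norm x y \<ge> 0"
  using eisenstein_norm_pos[of x y] by (cases "x = 0 \<and> y = 0") (auto simp: eisenstein_norm_def)

lemma eisenstein_norm_commute: "eisenstein_norm y x = eisenstein_norm x y"
  and eisenstein_norm_scale: "eisenstein_norm (c*x) (c*y) = c^2 * eisenstein_norm x y"
  and eisenstein_norm_shear: "eisenstein_norm (x - y) (x + 2*y) = 3 * eisenstein_norm x y"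
  by (simp_all add: eisenstein_norm_def power2_eq_square algebra_simps)

lemma eisenstein_norm_mult:
  "eisenstein_norm x1 y1 * eisenstein_norm x2 y2 =
     eisenstein_norm (x1*x2 - y1*y2) (x1*y2 + x2*y1 + y1*y2)"
  by (simp add: eisenstein_norm_def power2_eq_square algebra_simps)

lemma even_eisenstein_norm_imp_even:
  assumes "even (eisenstein_norm x y)"
  shows "even x \<and> even y"
  using assms by (cases "even x"; cases "even y") (auto simp: eisenstein_norm_def power2_eq_square)

lemma eisenstein_norm_eq_3_iff:
  "eisenstein_norm x y = 3 \<longleftrightarrow> (x, y) \<in> {(1,1), (-1,-1), (1,-2), (-2,1), (-1,2), (2,-1)}"
proof
  assume Q: "eisenstein_norm x y = 3"
  have "(2*x + y)^2 + 3 * y^2 = 12" "(2*y + x)^2 + 3 * x^2 = 12"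
    using four_eisenstein_norm[of x y] four_eisenstein_norm[of y x] Q
    by (simp_all add: eisenstein_norm_commute)
  then have "x^2 \<le> 4" "y^2 \<le> 4"
    using zero_le_power2[of "2*x + y"] zero_le_power2[of "2*y + x"] by linarith+
  then have "\<bar>x\<bar> \<le> 2" "\<bar>y\<bar> \<le> 2"
    using abs_le_square_iff[of x 2] abs_le_square_iff[of y 2] by simp_all
  then have "x \<in> {-2, -1, 0, 1, 2}" "y \<in> {-2, -1, 0, 1, 2}" by auto
  then show "(x, y) \<in> {(1,1), (-1,-1), (1,-2), (-2,1), (-1,2), (2,-1)}"
    using Q by (auto simp: eisenstein_norm_def)
qed (auto simp: eisenstein_norm_def)

lemma fermat_theorem_int:
  fixes p :: nat and z :: int
  assumes p: "prime p" and z: "\<not> int p dvd z"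
  shows "[z^(p-1) = 1] (mod int p)"
proof -
  have "coprime z (int p)"
    using prime_imp_coprime[of "int p" z] p z by (simp add: coprime_commute)
  then show ?thesis
    using residues.euler_theorem[of "int p" z] prime_gt_1_nat[OF p]
    by (simp add: residues_def totient_prime[OF p])
qed

lemma cube_cong_imp_cong:
  fixes p :: nat and x y :: int
  assumes p: "prime p" "p mod 3 = 2" and cubes: "[x^3 = y^3] (mod int p)"
  shows "[x = y] (mod int p)"
proof -
  have prime_int: "prime (int p)"
    using p(1) by simp
  have dvd_iff: "int p dvd x \<longleftrightarrow> int p dvd y"
    using cong_dvd_iff[OF cubes] prime_int by (simp add: prime_dvd_power_iff)
  show ?thesis
  proof (cases "int p dvd y")
    case True
    with dvd_iff show ?thesis
      by (simp add: cong_iff_dvd_diff)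
  next
    case False
    with dvd_iff have x: "\<not> int p dvd x" by blast
    \<comment> \<open>Since \<open>p - 1 = 3k + 1\<close>, Fermat's little theorem recovers \<open>z\<close> from \<open>z^3\<close>.\<close>
    define k where "k = p div 3"
    have pow: "z^(p-1) = (z^3)^k * z" for z :: int
    proof -
      have "p - 1 = 3*k + 1"
        using p(2) unfolding k_def by presburger
      then show ?thesis
        by (simp add: power_mult power_add)
    qed
    have "[(y^3)^k * x = (x^3)^k * x] (mod int p)"
      by (intro cong_mult cong_pow cong_refl cong_sym[OF cubes])
    also have "[(x^3)^k * x = 1] (mod int p)"
      using fermat_theorem_int[OF p(1) x] by (simp only: pow)
    also have "[1 = (y^3)^k * y] (mod int p)"
      using fermat_theorem_int[OF p(1) False] unfolding pow by (rule cong_sym)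
    finally have "[(y^3)^k * x = (y^3)^k * y] (mod int p)" .
    moreover have "coprime ((y^3)^k) (int p)"
      using prime_imp_coprime[OF prime_int False] by (simp add: coprime_commute)
    ultimately show ?thesis
      using cong_mult_lcancel by blast
  qed
qed

lemma prime_mod3_2_dvd_eisenstein_norm:
  fixes p :: nat
  assumes p: "prime p" "p mod 3 = 2" and dvd: "int p dvd eisenstein_norm x y"
  shows "int p dvd x \<and> int p dvd y"
proof -
  have prime_int: "prime (int p)"
    using p(1) by simp
  have "x^3 - y^3 = (x - y) * eisenstein_norm x y"
    by (simp add: eisenstein_norm_def power2_eq_square power3_eq_cube algebra_simps)
  then have "[x^3 = y^3] (mod int p)"
    using dvd by (simp add: cong_iff_dvd_diff)
  then have xy: "int p dvd x - y"
    using cube_cong_imp_cong[OF p] by (simp add: cong_iff_dvd_diff)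
  have "3 * y^2 = eisenstein_norm x y - (x - y) * (x + 2*y)"
    by (simp add: eisenstein_norm_def power2_eq_square algebra_simps)
  then have "int p dvd 3 * y^2"
    using dvd xy by simp
  moreover have "\<not> int p dvd 3"
  proof
    assume "int p dvd 3"
    then have "p dvd 3" by presburger
    then have "p \<le> 3"
      by (simp add: dvd_imp_le)
    with p(2) have "p = 2" by presburger
    with \<open>p dvd 3\<close> show False by simp
  qed
  ultimately have "int p dvd y"
    using prime_int by (simp add: prime_dvd_mult_iff prime_dvd_power_iff)
  with xy show ?thesis
    by (metis diff_add_cancel dvd_add)
qed

lemma exists_primitive_cube_root_of_unity_mod:
  fixes p :: nat
  assumes p: "prime p" "p mod 3 = 1"
  obtains w :: int where "int p dvd w^2 + w + 1"
proof -
  have p1: "p > 1"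
    using prime_gt_1_nat[OF p(1)] .
  have "3 dvd p - 1"
    using p(2) p1 by presburger
  then have "card {x \<in> totatives p. ord p x = 3} = totient 3"
    using prime_card_elements_with_ord_eq_totient[OF p1 p(1), of 3] by simp
  also have "totient 3 = 2"
    using totient_prime[of 3] by simp
  finally obtain x where x: "ord p x = 3"
    by (metis (mono_tags, lifting) card.empty empty_Collect_eq zero_neq_numeral)
  have "[int x^3 = 1] (mod int p)"
    using ord_divides[of x 3 p] x by (metis cong_int_iff dvd_refl of_nat_1 of_nat_power)
  then have "int p dvd (int x - 1) * (int x^2 + int x + 1)"
    by (simp add: cong_iff_dvd_diff power2_eq_square power3_eq_cube algebra_simps)
  moreover have "\<not> int p dvd int x - 1"
    using x ord_eq_Suc_0_iff[of p x] by (simp add: cong_iff_dvd_diff flip: cong_int_iff)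
  ultimately have "int p dvd int x^2 + int x + 1"
    using p(1) by (simp add: prime_dvd_mult_iff)
  then show thesis ..
qed

lemma thue_lemma:
  fixes n m :: nat and w :: int
  assumes "n > 0" "n < (m + 1)^2"
  obtains x y where "x \<noteq> 0 \<or> y \<noteq> 0" "\<bar>x\<bar> \<le> int m" "\<bar>y\<bar> \<le> int m" "int n dvd x - w * y"
proof -
  define A where "A = {0..m} \<times> {0..m}"
  define f where "f = (\<lambda>(u, v). (int u - w * int v) mod int n)"
  have "f ` A \<subseteq> {0..<int n}"
    using assms(1) by (auto simp: f_def)
  then have "\<not> inj_on f A"
    using card_inj_on_le[of f A "{0..<int n}"] assms(2)
    by (auto simp: A_def power2_eq_square)
  then obtain u1 v1 u2 v2 where uv: "(u1, v1) \<in> A" "(u2, v2) \<in> A" "(u1, v1) \<noteq> (u2, v2)"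
    "f (u1, v1) = f (u2, v2)"
    unfolding inj_on_def by auto
  show thesis
  proof
    show "int u1 - int u2 \<noteq> 0 \<or> int v1 - int v2 \<noteq> 0"
      using uv(3) by auto
    show "\<bar>int u1 - int u2\<bar> \<le> int m" "\<bar>int v1 - int v2\<bar> \<le> int m"
      using uv(1,2) by (auto simp: A_def)
    have "int n dvd (int u1 - w * int v1) - (int u2 - w * int v2)"
      using uv(4) by (simp add: f_def mod_eq_dvd_iff)
    then show "int n dvd (int u1 - int u2) - w * (int v1 - int v2)"
      by (simp add: algebra_simps)
  qed
qed

lemma eisenstein_norm_le:
  assumes "\<bar>x\<bar> \<le> m" "\<bar>y\<bar> \<le> m"
  shows "eisenstein_norm x y \<le> 3 * m^2"
proof -
  have "x * y \<le> \<bar>x\<bar> * \<bar>y\<bar>"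
    by (metis abs_ge_self abs_mult)
  also have "\<dots> \<le> m * m"
    using assms by (simp add: mult_mono)
  finally show ?thesis
    using assms abs_le_square_iff[of x m] abs_le_square_iff[of y m]
    by (simp add: eisenstein_norm_def power2_eq_square)
qed

lemma eisenstein_norm_eq_of_odd_dvd:
  assumes "odd n" "n dvd eisenstein_norm x y"
    and "0 < eisenstein_norm x y" "eisenstein_norm x y < 3 * n"
  shows "eisenstein_norm x y = n"
proof -
  obtain j where j: "eisenstein_norm x y = n * j"
    using assms(2) by blast
  have "n > 0"
    using assms(3,4) by linarith
  with j assms(3,4) have "0 < j" "j < 3"
    by (simp_all add: zero_less_mult_iff)
  moreover have "j \<noteq> 2"
  proof
    assume "j = 2"
    with j have "even (eisenstein_norm x y)" by simp
    then obtain a b where "x = 2*a" "y = 2*b"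
      using even_eisenstein_norm_imp_even by blast
    with j \<open>j = 2\<close> have "n = 2 * eisenstein_norm a b"
      using eisenstein_norm_scale[of 2 a b] by simp
    with assms(1) show False by simp
  qed
  ultimately have "j = 1" by linarith
  with j show ?thesis by simp
qed

lemma prime_mod3_1_eq_eisenstein_norm:
  fixes p :: nat
  assumes p: "prime p" "p mod 3 = 1"
  obtains c d where "eisenstein_norm c d = int p"
proof -
  obtain w where w: "int p dvd w^2 + w + 1"
    using exists_primitive_cube_root_of_unity_mod[OF p] .
  define m where "m = floor_sqrt p"
  have "m^2 \<noteq> p"
    using p(1) prime_power_iff[of m 2] by auto
  then have m_sq: "m^2 < p"
    using floor_sqrt_power2_le[of p] unfolding m_def by linarith
  have "p < (m + 1)^2"
    using Suc_floor_sqrt_power2_gt[of p] unfolding m_def by simp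
  then obtain x y where nz: "x \<noteq> 0 \<or> y \<noteq> 0" and bounds: "\<bar>x\<bar> \<le> int m" "\<bar>y\<bar> \<le> int m"
    and dvd: "int p dvd x - w * y"
    using thue_lemma[of p m w] prime_gt_0_nat[OF p(1)] by blast
  have "eisenstein_norm x y = (x - w*y) * (x + w*y + y) + y^2 * (w^2 + w + 1)"
    by (simp add: eisenstein_norm_def power2_eq_square algebra_simps)
  then have "int p dvd eisenstein_norm x y"
    using dvd w by simp
  moreover have "eisenstein_norm x y < 3 * int p"
    using eisenstein_norm_le[OF bounds] m_sq by (smt (verit) of_nat_less_iff of_nat_power)
  moreover have "odd (int p)"
    using p prime_odd_nat[OF p(1)] prime_ge_2_nat[OF p(1)] by (cases "p = 2") auto
  ultimately have "eisenstein_norm x y = int p"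
    using eisenstein_norm_eq_of_odd_dvd eisenstein_norm_pos[OF nz] by blast
  then show thesis ..
qed

lemma prime_mod3_1_square_eq_eisenstein_norm:
  fixes p :: nat
  assumes p: "prime p" "p mod 3 = 1"
  obtains u v where "eisenstein_norm u v = int p ^ 2" "u \<noteq> 0" "v \<noteq> 0" "u + v \<noteq> 0"
proof -
  obtain c d where cd: "eisenstein_norm c d = int p"
    using prime_mod3_1_eq_eisenstein_norm[OF p] .
  have not_square: "int p \<noteq> z^2" for z
  proof
    assume "int p = z^2"
    then have "p = (nat \<bar>z\<bar>)^2"
      by (metis nat_int nat_power_eq power2_abs abs_ge_zero)
    with p(1) show False
      using prime_power_iff[of "nat \<bar>z\<bar>" 2] by simp
  qed
  have not_three_square: "int p \<noteq> 3 * z^2" for z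
  proof
    assume "int p = 3 * z^2"
    then have "int p mod 3 = 0" by simp
    with p(2) show False by presburger
  qed
  have nondegenerate: "c \<noteq> d" "c \<noteq> -d" "d \<noteq> 0" "d \<noteq> -2*c" "c \<noteq> 0" "c \<noteq> -2*d"
    using cd not_square[of c] not_square[of d] not_three_square[of c] not_three_square[of d]
    by (auto simp: eisenstein_norm_def power2_eq_square)
  \<comment> \<open>\<open>u - v\<omega> = (c - d\<omega>)\<^sup>2\<close>.\<close>
  define u where "u = c^2 - d^2"
  define v where "v = 2*c*d + d^2"
  have "u = (c - d) * (c + d)" "v = d * (2*c + d)" "u + v = c * (c + 2*d)"
    by (simp_all add: u_def v_def power2_eq_square algebra_simps)
  then have "u \<noteq> 0" "v \<noteq> 0" "u + v \<noteq> 0"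
    using nondegenerate by auto
  moreover have "eisenstein_norm u v = int p ^ 2"
    using eisenstein_norm_mult[of c d c d] cd
    by (simp add: u_def v_def power2_eq_square algebra_simps)
  ultimately show thesis
    using that by blast
qed

text \<open>\<open>(a, b)\<close> stands for the point \<open>(a \<Phi>\<^sub>1 + b \<Phi>\<^sub>2) / 3\<close> of \<open>E\<^sub>1\<close>, see \<open>lattice_E1_eq_e1_points\<close>.\<close>

definition reps_mod3 :: "int \<Rightarrow> (int \<times> int) set" where
  "reps_mod3 K = {(a, b). a mod 3 = 2 \<and> b mod 3 = 2 \<and> eisenstein_norm a b = K}"

lemma card_reps_mod3_eq_3_imp_axis:
  assumes card: "card (reps_mod3 K) = 3" and ab: "(a, b) \<in> reps_mod3 K"
  shows "a = b \<or> a = -2*b \<or> b = -2*a"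
proof (rule ccontr)
  assume off_axes: "\<not> (a = b \<or> a = -2*b \<or> b = -2*a)"
  \<comment> \<open>The rotations by \<open>\<plusminus>120\<degree>\<close> and the reflection in \<open>a = b\<close> preserve \<open>reps_mod3 K\<close>.\<close>
  let ?orbit = "{(a, b), (-a - b, a), (b, -a - b), (b, a)}"
  have "?orbit \<subseteq> reps_mod3 K"
  proof -
    from ab have "a mod 3 = 2" "b mod 3 = 2" "eisenstein_norm a b = K"
      by (simp_all add: reps_mod3_def)
    moreover from this have "(-a - b) mod 3 = 2"
      by presburger
    moreover have "eisenstein_norm (-a - b) a = eisenstein_norm a b"
      "eisenstein_norm b (-a - b) = eisenstein_norm a b" "eisenstein_norm b a = eisenstein_norm a b"
      by (simp_all add: eisenstein_norm_def power2_eq_square algebra_simps)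
    ultimately show ?thesis
      by (simp add: reps_mod3_def)
  qed
  moreover have "card ?orbit = 4"
    using off_axes by auto
  ultimately have "4 \<le> card (reps_mod3 K)"
    using card by (metis card_mono card.infinite zero_neq_numeral)
  with card show False by simp
qed

lemma axis_reps_mod3:
  assumes "(a, b) \<in> reps_mod3 K" "a = b \<or> a = -2*b \<or> b = -2*a"
  obtains t where "t mod 3 = 2" "K = 3 * t^2"
  using assms by (auto simp: reps_mod3_def eisenstein_norm_def power2_eq_square)

lemma off_axis_reps_mod3:
  assumes Q: "eisenstein_norm x y = t^2" and t: "\<not> 3 dvd t"
    and nz: "x \<noteq> 0" "y \<noteq> 0" "x + y \<noteq> 0"
  obtains a b where "(a, b) \<in> reps_mod3 (3 * t^2)" "a \<noteq> b" "a \<noteq> -2*b" "b \<noteq> -2*a"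
proof -
  have "t^2 = (x - y)^2 + 3 * (x * y)"
    using Q by (simp add: eisenstein_norm_def power2_eq_square algebra_simps)
  have "\<not> 3 dvd x - y"
  proof
    assume "3 dvd x - y"
    then have "3 dvd t^2"
      unfolding \<open>t^2 = (x - y)^2 + 3 * (x * y)\<close> by (simp add: power2_eq_square)
    with t show False
      by (simp add: prime_dvd_power_iff)
  qed
  then obtain s :: int where s: "s = 1 \<or> s = -1" "(s * (x - y)) mod 3 = 2"
  proof (cases "(x - y) mod 3 = 2")
    case True
    then show thesis
      using that[of 1] by simp
  next
    case False
    with \<open>\<not> 3 dvd x - y\<close> have "(-1 * (x - y)) mod 3 = 2"
      by presburger
    then show thesis
      using that by blast
  qed
  \<comment> \<open>\<open>(x - y) - (x + 2y)\<omega> = (x - y\<omega>)(1 - \<omega>)\<close>, and \<open>1 - \<omega>\<close> has norm \<open>3\<close>.\<close>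
  define a where "a = s * (x - y)"
  define b where "b = s * (x + 2*y)"
  have "b = a + 3 * (s * y)"
    by (simp add: a_def b_def algebra_simps)
  then have "b mod 3 = 2"
    using s(2) unfolding a_def by simp
  moreover have "eisenstein_norm a b = 3 * t^2"
    using s(1) eisenstein_norm_scale[of s "x - y" "x + 2*y"]
    by (auto simp: a_def b_def eisenstein_norm_shear Q)
  ultimately have "(a, b) \<in> reps_mod3 (3 * t^2)"
    using s(2) by (simp add: reps_mod3_def a_def)
  moreover have "a \<noteq> b" "a \<noteq> -2*b" "b \<noteq> -2*a"
    using s(1) nz by (auto simp: a_def b_def algebra_simps)
  ultimately show thesis
    using that by blast
qed

lemma card_reps_mod3_eq_3_prime_factor:
  fixes p :: nat
  assumes card: "card (reps_mod3 (3 * t^2)) = 3" and t: "\<not> 3 dvd t"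
    and p: "prime p" "int p dvd t"
  shows "p mod 3 = 2"
proof -
  have "p mod 3 \<noteq> 0"
  proof
    assume "p mod 3 = 0"
    then have "3 = p"
      using primes_dvd_imp_eq[of 3 p] p(1) by (simp add: dvd_eq_mod_eq_0)
    with p(2) t show False by simp
  qed
  moreover have "p mod 3 \<noteq> 1"
  proof
    assume "p mod 3 = 1"
    then obtain u v where uv: "eisenstein_norm u v = int p ^ 2" "u \<noteq> 0" "v \<noteq> 0" "u + v \<noteq> 0"
      using prime_mod3_1_square_eq_eisenstein_norm[OF p(1)] by blast
    obtain r where r: "t = int p * r"
      using p(2) by blast
    with t have "r \<noteq> 0" by auto
    have "eisenstein_norm (r * u) (r * v) = t^2"
      by (simp add: eisenstein_norm_scale uv(1) r power_mult_distrib)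
    moreover have "r * u \<noteq> 0" "r * v \<noteq> 0" "r * u + r * v \<noteq> 0"
      using \<open>r \<noteq> 0\<close> uv(2-4) by (simp_all flip: distrib_left)
    ultimately obtain a b where "(a, b) \<in> reps_mod3 (3 * t^2)" "a \<noteq> b" "a \<noteq> -2*b" "b \<noteq> -2*a"
      using off_axis_reps_mod3 t by metis
    with card show False
      using card_reps_mod3_eq_3_imp_axis by blast
  qed
  ultimately show ?thesis by presburger
qed

lemma card_reps_mod3_eq_3_imp:
  assumes card: "card (reps_mod3 K) = 3"
  obtains M :: "nat multiset" where "\<forall>p \<in># M. prime p \<and> p mod 3 = 2" "K = 3 * int (prod_mset M)^2"
proof -
  obtain a b where "(a, b) \<in> reps_mod3 K"
    using card by (metis card.empty ex_in_conv prod.exhaust zero_neq_numeral)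
  then obtain t where t: "t mod 3 = 2" "K = 3 * t^2"
    using card card_reps_mod3_eq_3_imp_axis axis_reps_mod3 by metis
  then have "t \<noteq> 0" "\<not> 3 dvd t" by auto
  define M where "M = prime_factorization (nat \<bar>t\<bar>)"
  show thesis
  proof
    show "\<forall>p \<in># M. prime p \<and> p mod 3 = 2"
    proof
      fix p assume "p \<in># M"
      then have "prime p" "p dvd nat \<bar>t\<bar>"
        by (auto simp: M_def in_prime_factors_iff)
      then have "int p dvd t"
        by simp
      then show "prime p \<and> p mod 3 = 2"
        using card t \<open>prime p\<close> \<open>\<not> 3 dvd t\<close> card_reps_mod3_eq_3_prime_factor by blast
    qed
    have "prod_mset M = nat \<bar>t\<bar>"
      using \<open>t \<noteq> 0\<close> by (simp add: M_def)
    then show "K = 3 * int (prod_mset M)^2"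
      using t(2) by simp
  qed
qed

lemma prod_mset_dvd_of_eisenstein_norm:
  assumes "\<forall>p \<in># M. prime p \<and> p mod 3 = 2" "int (prod_mset M)^2 dvd eisenstein_norm a b"
  shows "int (prod_mset M) dvd a \<and> int (prod_mset M) dvd b"
  using assms
proof (induction M arbitrary: a b)
  case empty
  then show ?case by simp
next
  case (add p M)
  have p: "prime p" "p mod 3 = 2"
    using add.prems(1) by simp_all
  have "int p dvd int (prod_mset (add_mset p M))^2"
    by (simp add: power2_eq_square)
  then have "int p dvd eisenstein_norm a b"
    using add.prems(2) dvd_trans by blast
  then obtain a' b' where ab: "a = int p * a'" "b = int p * b'"
    using prime_mod3_2_dvd_eisenstein_norm[OF p] by (meson dvdE)
  have "int p^2 * int (prod_mset M)^2 dvd int p^2 * eisenstein_norm a' b'"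
    using add.prems(2) by (simp add: ab eisenstein_norm_scale power_mult_distrib)
  then have "int (prod_mset M)^2 dvd eisenstein_norm a' b'"
    using prime_gt_0_nat[OF p(1)] by simp
  then have "int (prod_mset M) dvd a' \<and> int (prod_mset M) dvd b'"
    using add.IH add.prems(1) by simp
  then show ?case
    by (simp add: ab)
qed

lemma reps_mod3_three_square:
  assumes g: "g mod 3 = 2"
    and dvd: "\<And>a b. eisenstein_norm a b = 3 * g^2 \<Longrightarrow> g dvd a \<and> g dvd b"
  shows "reps_mod3 (3 * g^2) = {(g, g), (g, -2*g), (-2*g, g)}"
proof (intro equalityI subsetI)
  fix z assume "z \<in> reps_mod3 (3 * g^2)"
  then obtain a b where z: "z = (a, b)" and ab: "a mod 3 = 2" "b mod 3 = 2"
    "eisenstein_norm a b = 3 * g^2"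
    by (auto simp: reps_mod3_def)
  then obtain a' b' where a': "a = g * a'" and b': "b = g * b'"
    using dvd by (meson dvdE)
  have "g \<noteq> 0"
    using g by auto
  then have "eisenstein_norm a' b' = 3"
    using ab(3) by (simp add: a' b' eisenstein_norm_scale)
  then have "(a', b') \<in> {(1,1), (-1,-1), (1,-2), (-2,1), (-1,2), (2,-1)}"
    by (simp add: eisenstein_norm_eq_3_iff)
  then show "z \<in> {(g, g), (g, -2*g), (-2*g, g)}"
    using ab(1,2) g by (auto simp: z a' b') presburger+
next
  fix z assume "z \<in> {(g, g), (g, -2*g), (-2*g, g)}"
  moreover have "(-2*g) mod 3 = 2"
    using g by presburger
  moreover have "eisenstein_norm g g = 3 * g^2" "eisenstein_norm g (-2*g) = 3 * g^2"
    "eisenstein_norm (-2*g) g = 3 * g^2"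
    by (simp_all add: eisenstein_norm_def power2_eq_square)
  ultimately show "z \<in> reps_mod3 (3 * g^2)"
    using g by (auto simp: reps_mod3_def)
qed

lemma card_reps_mod3_prod_mset:
  assumes M: "\<forall>p \<in># M. prime p \<and> p mod 3 = 2"
  shows "card (reps_mod3 (3 * int (prod_mset M)^2)) = 3"
proof -
  define s where "s = int (prod_mset M)"
  have "\<not> 3 dvd prod_mset M"
    using M by (auto simp: prime_dvd_prod_mset_primes_iff)
  then have "\<not> 3 dvd s"
    unfolding s_def by presburger
  define g where "g = (if s mod 3 = 2 then s else -s)"
  have g: "g mod 3 = 2"
    using \<open>\<not> 3 dvd s\<close> by (simp add: g_def; presburger)
  have g_sq: "g^2 = s^2"
    by (simp add: g_def)
  have "g dvd a \<and> g dvd b" if "eisenstein_norm a b = 3 * g^2" for a b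
  proof -
    have "s^2 dvd eisenstein_norm a b"
      using that g_sq by simp
    then show ?thesis
      using prod_mset_dvd_of_eisenstein_norm[OF M] by (simp add: g_def s_def)
  qed
  then have "reps_mod3 (3 * s^2) = {(g, g), (g, -2*g), (-2*g, g)}"
    using reps_mod3_three_square[OF g] g_sq by simp
  moreover have "g \<noteq> 0"
    using g by auto
  ultimately show ?thesis
    by (simp add: s_def)
qed

lemma card_reps_mod3_eq_3_iff:
  "card (reps_mod3 K) = 3 \<longleftrightarrow>
     (\<exists>M :: nat multiset. (\<forall>p \<in># M. prime p \<and> p mod 3 = 2) \<and> K = 3 * int (prod_mset M)^2)"
  using card_reps_mod3_eq_3_imp card_reps_mod3_prod_mset by metis

definition e1_point :: "real^2 \<Rightarrow> real^2 \<Rightarrow> int \<Rightarrow> int \<Rightarrow> real^2" where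
  "e1_point \<Phi>1 \<Phi>2 a b = (of_int a / 3) *\<^sub>R \<Phi>1 + (of_int b / 3) *\<^sub>R \<Phi>2"

lemma lattice_E1_eq_e1_points:
  "lattice_E1 \<Phi>1 \<Phi>2 = {e1_point \<Phi>1 \<Phi>2 a b | a b. a mod 3 = 2 \<and> b mod 3 = 2}"
proof (intro equalityI subsetI)
  fix v assume "v \<in> lattice_E1 \<Phi>1 \<Phi>2"
  then obtain n m :: int where v: "v = of_int n *\<^sub>R \<Phi>1 + of_int m *\<^sub>R \<Phi>2 - (1/3) *\<^sub>R (\<Phi>1 + \<Phi>2)"
    unfolding lattice_E1_def by blast
  have "v = e1_point \<Phi>1 \<Phi>2 (3*n - 1) (3*m - 1)"
    unfolding v e1_point_def by (simp add: algebra_simps diff_divide_distrib)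
  moreover have "(3*n - 1) mod 3 = 2" "(3*m - 1) mod 3 = 2"
    by presburger+
  ultimately show "v \<in> {e1_point \<Phi>1 \<Phi>2 a b | a b. a mod 3 = 2 \<and> b mod 3 = 2}"
    by blast
next
  fix v assume "v \<in> {e1_point \<Phi>1 \<Phi>2 a b | a b. a mod 3 = 2 \<and> b mod 3 = 2}"
  then obtain a b where v: "v = e1_point \<Phi>1 \<Phi>2 a b" and ab: "a mod 3 = 2" "b mod 3 = 2"
    by blast
  define n where "n = (a + 1) div 3"
  define m where "m = (b + 1) div 3"
  have a: "a = 3*n - 1" and b: "b = 3*m - 1"
    using ab unfolding n_def m_def by presburger+
  have "v = of_int n *\<^sub>R \<Phi>1 + of_int m *\<^sub>R \<Phi>2 - (1/3) *\<^sub>R (\<Phi>1 + \<Phi>2)"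
    unfolding v e1_point_def a b by (simp add: algebra_simps diff_divide_distrib)
  then show "v \<in> lattice_E1 \<Phi>1 \<Phi>2"
    unfolding lattice_E1_def by blast
qed

context
  fixes \<Phi>1 \<Phi>2 :: "real^2"
  assumes unit: "norm \<Phi>1 = 1" "norm \<Phi>2 = 1" and angle: "\<Phi>1 \<bullet> \<Phi>2 = 1/2"
begin

lemma basis_inner: "\<Phi>1 \<bullet> \<Phi>1 = 1" "\<Phi>2 \<bullet> \<Phi>2 = 1" "\<Phi>1 \<bullet> \<Phi>2 = 1/2" "\<Phi>2 \<bullet> \<Phi>1 = 1/2"
  using unit angle by (simp_all add: inner_commute flip: power2_norm_eq_inner)

lemma normN_e1_point: "normN (e1_point \<Phi>1 \<Phi>2 a b) = of_int (eisenstein_norm a b) / 9"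
  unfolding normN_def e1_point_def eisenstein_norm_def
  by (simp add: inner_add_left inner_add_right basis_inner power2_eq_square field_simps)

lemma e1_point_inject: "e1_point \<Phi>1 \<Phi>2 a b = e1_point \<Phi>1 \<Phi>2 c d \<longleftrightarrow> a = c \<and> b = d"
proof
  assume eq: "e1_point \<Phi>1 \<Phi>2 a b = e1_point \<Phi>1 \<Phi>2 c d"
  have coord: "e1_point \<Phi>1 \<Phi>2 x y \<bullet> \<Phi>1 = of_int x / 3 + of_int y / 6"
    "e1_point \<Phi>1 \<Phi>2 x y \<bullet> \<Phi>2 = of_int x / 6 + of_int y / 3" for x y
    by (simp_all add: e1_point_def inner_add_left basis_inner)
  from eq have "e1_point \<Phi>1 \<Phi>2 a b \<bullet> \<Phi>1 = e1_point \<Phi>1 \<Phi>2 c d \<bullet> \<Phi>1"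
    "e1_point \<Phi>1 \<Phi>2 a b \<bullet> \<Phi>2 = e1_point \<Phi>1 \<Phi>2 c d \<bullet> \<Phi>2"
    by simp_all
  then have "real_of_int a = of_int c \<and> real_of_int b = of_int d"
    unfolding coord by linarith
  then show "a = c \<and> b = d"
    by simp
qed simp

lemma sphere_E1_eq_image:
  assumes "L > 0" "9 * L^2 = of_int K"
  shows "{v \<in> lattice_E1 \<Phi>1 \<Phi>2. sqrt (normN v) = L} = (\<lambda>(a, b). e1_point \<Phi>1 \<Phi>2 a b) ` reps_mod3 K"
proof -
  have "sqrt (normN (e1_point \<Phi>1 \<Phi>2 a b)) = L \<longleftrightarrow> eisenstein_norm a b = K" for a b
  proof -
    have "sqrt (normN (e1_point \<Phi>1 \<Phi>2 a b)) = L \<longleftrightarrow> normN (e1_point \<Phi>1 \<Phi>2 a b) = L^2"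
      using assms(1) eisenstein_norm_nonneg[of a b] by (auto simp: normN_e1_point real_sqrt_unique)
    also have "\<dots> \<longleftrightarrow> eisenstein_norm a b = K"
      using assms(2) by (auto simp: normN_e1_point)
    finally show ?thesis .
  qed
  then show ?thesis
    unfolding lattice_E1_eq_e1_points reps_mod3_def by auto
qed

lemma card_sphere_E1:
  assumes "L > 0" "9 * L^2 = of_int K"
  shows "card {v \<in> lattice_E1 \<Phi>1 \<Phi>2. sqrt (normN v) = L} = card (reps_mod3 K)"
  unfolding sphere_E1_eq_image[OF assms]
  by (rule card_image) (auto simp: inj_on_def e1_point_inject)

lemma sphere_E1_radius_integral:
  assumes "v \<in> lattice_E1 \<Phi>1 \<Phi>2" "sqrt (normN v) = L"
  obtains K where "9 * L^2 = of_int K"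
proof -
  obtain a b where "v = e1_point \<Phi>1 \<Phi>2 a b"
    using assms(1) unfolding lattice_E1_eq_e1_points by blast
  then have "normN v = of_int (eisenstein_norm a b) / 9" "normN v \<ge> 0"
    using eisenstein_norm_nonneg[of a b] by (simp_all add: normN_e1_point)
  with assms(2) have "9 * L^2 = of_int (eisenstein_norm a b)"
    by auto
  then show thesis ..
qed

end

lemma prod_mset_real_of_nat: "(\<Prod>p\<in>#M. real p) = real (prod_mset M)"
  by (induction M) auto

lemma eq_divide_sqrt3_iff:
  fixes L :: real
  assumes "L > 0"
  shows "L = real n / sqrt 3 \<longleftrightarrow> 9 * L^2 = of_int (3 * int n^2)"
proof -
  have "9 * (real n / sqrt 3)^2 = 3 * real n^2"
    by (simp add: power_divide)
  moreover have "L = real n / sqrt 3 \<longleftrightarrow> 9 * L^2 = 9 * (real n / sqrt 3)^2"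
    using assms by (simp add: power2_eq_iff_nonneg)
  ultimately show ?thesis
    by simp argo
qed

theorem theorem3:
  fixes \<Phi>1 \<Phi>2 :: "real^2" and L :: real
  assumes "norm \<Phi>1 = 1" and "norm \<Phi>2 = 1" and "\<Phi>1 \<bullet> \<Phi>2 = 1/2"
    and "L > 0"
  shows "card {v \<in> lattice_E1 \<Phi>1 \<Phi>2. sqrt (normN v) = L} = 3 \<longleftrightarrow>
         (\<exists>M :: nat multiset. (\<forall>p \<in># M. prime p \<and> p mod 3 = 2) \<and>
             L = (\<Prod>p\<in>#M. real p) / sqrt 3)"
proof -
  let ?S = "{v \<in> lattice_E1 \<Phi>1 \<Phi>2. sqrt (normN v) = L}"
  have card_S: "card ?S = card (reps_mod3 K)" if "9 * L^2 = of_int K" for K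
    using card_sphere_E1[OF assms that] .
  have radius: "L = (\<Prod>p\<in>#M. real p) / sqrt 3 \<longleftrightarrow> 9 * L^2 = of_int (3 * int (prod_mset M)^2)"
    for M :: "nat multiset"
    using eq_divide_sqrt3_iff[OF \<open>L > 0\<close>] by (simp only: prod_mset_real_of_nat)
  show ?thesis
  proof
    assume card: "card ?S = 3"
    then obtain v where "v \<in> ?S"
      by (metis card.empty ex_in_conv zero_neq_numeral)
    then obtain K where "9 * L^2 = of_int K"
      using sphere_E1_radius_integral[OF assms(1-3)] by blast
    then show "\<exists>M. (\<forall>p \<in># M. prime p \<and> p mod 3 = 2) \<and> L = (\<Prod>p\<in>#M. real p) / sqrt 3"
      using card card_S card_reps_mod3_eq_3_iff radius by metis
  next
    assume "\<exists>M. (\<forall>p \<in># M. prime p \<and> p mod 3 = 2) \<and> L = (\<Prod>p\<in>#M. real p) / sqrt 3"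
    then show "card ?S = 3"
      using card_S card_reps_mod3_prod_mset radius by metis
  qed
qed

end
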